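(* In the network described in the context with homogeneous all-to-all coupling $\varepsilon_{ij}=(1-\delta_{ij})\varepsilon$, $\varepsilon>0$, $(N-1)\varepsilon<1$, a neuronal partial reset function $R$ and a strictly convex rise function $U$ ($U''>0$), the asynchronous periodic (splay) state exists and is linearly stable.
   Context: Model: $N$ units with phases $\phi_i$. A rise function is a smooth $U:[0,\infty)\to[0,\infty)$ with $U'>0$, $U(0)=0$, $U(1)=1$. A partial reset function is a monotonically increasing $R:\mathbb{R}\to\mathbb{R}$ with $R(0)=0$; neuronal if $0\le R(\zeta)\le\zeta$ for $\zeta\ge0$. $H_\varepsilon(\phi)=U^{-1}(U(\phi)+\varepsilon)$, $J_\varepsilon(\phi)=U^{-1}(R(U(\phi)+\varepsilon-1))$. Dynamics: $\varepsilon_{ij}$ is the pulse strength from unit $j$ to unit $i$. Between events phases increase at unit rate. When at time $t$ the set $\Theta^{(0)}=\{j:\phi_j(t^-)=1\}$ is nonempty an avalanche occurs: with $u_i^{(0)}=U(\phi_i(t^-))$, $u_i^{(k+1)}=u_i^{(k)}+\sum_{j\in\Theta^{(k)}}\varepsilon_{ij}$, $\Theta^{(k+1)}=\{i:u_i^{(k)}<1\le u_i^{(k+1)}\}$ until empty, $\Theta=\bigcup_k\Theta^{(k)}$; then $\phi_i(t^+)=H_{\sum_{j\in\Theta}\varepsilon_{ij}}(\phi_i(t^-))$ for $i\notin\Theta$ and $\phi_i(t^+)=J_{\sum_{j\in\Theta}\varepsilon_{ij}}(\phi_i(t^-))$ for $i\in\Theta$. The return map sends the state just before a fixed reference unit fires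 to the state just before it fires next. An asynchronous periodic (splay) state is a state invariant under the return map in which every avalanche has size $1$. Linear stability means that, to first order, small phase perturbations tend to zero under iteration of the return map. *)

theory Defs
  imports "HOL-Analysis.Analysis"
begin

definition higher_derivs :: "(real \<Rightarrow> real) \<Rightarrow> (nat \<Rightarrow> real \<Rightarrow> real) \<Rightarrow> bool" where
  "higher_derivs U D \<longleftrightarrow> D 0 = U \<and>
     (\<forall>n x. x \<ge> 0 \<longrightarrow> (D n has_real_derivative D (Suc n) x) (at x within {0..}))"

definition rise_function :: "(real \<Rightarrow> real) \<Rightarrow> (nat \<Rightarrow> real \<Rightarrow> real) \<Rightarrow> bool" where
  "rise_function U D \<longleftrightarrow> higher_derivs U D \<and> (\<forall>x\<ge>0. D 1 x > 0) \<and> U 0 = 0 \<and> U 1 = 1"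

definition partial_reset :: "(real \<Rightarrow> real) \<Rightarrow> bool" where
  "partial_reset R \<longleftrightarrow> mono R \<and> R 0 = 0"

definition neuronal_reset :: "(real \<Rightarrow> real) \<Rightarrow> bool" where
  "neuronal_reset R \<longleftrightarrow> partial_reset R \<and> (\<forall>z\<ge>0. 0 \<le> R z \<and> R z \<le> z)"

definition Uinv :: "(real \<Rightarrow> real) \<Rightarrow> real \<Rightarrow> real" where
  "Uinv U y = the_inv_into {0..} U y"

definition Hmap :: "(real \<Rightarrow> real) \<Rightarrow> real \<Rightarrow> real \<Rightarrow> real" where
  "Hmap U e x = Uinv U (U x + e)"

definition Jmap :: "(real \<Rightarrow> real) \<Rightarrow> (real \<Rightarrow> real) \<Rightarrow> real \<Rightarrow> real \<Rightarrow> real" where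
  "Jmap U R e x = Uinv U (R (U x + e - 1))"

text \<open>Avalanche stages: (u^(k), Theta^(k)) for the state phi (phases just before the event).
  E i j is the pulse strength from unit j to unit i.\<close>
fun aval :: "(real \<Rightarrow> real) \<Rightarrow> ('n::finite \<Rightarrow> 'n \<Rightarrow> real) \<Rightarrow> real^'n \<Rightarrow> nat
              \<Rightarrow> ('n \<Rightarrow> real) \<times> 'n set" where
  "aval U E \<phi> 0 = ((\<lambda>i. U (\<phi>$i)), {j. \<phi>$j = 1})"
| "aval U E \<phi> (Suc k) =
     (let u = fst (aval U E \<phi> k); \<Theta> = snd (aval U E \<phi> k);
          u' = (\<lambda>i. u i + (\<Sum>j\<in>\<Theta>. E i j))
      in (u', {i. u i < 1 \<and> 1 \<le> u' i}))"

definition Theta :: "(real \<Rightarrow> real) \<Rightarrow> ('n::finite \<Rightarrow> 'n \<Rightarrow> real) \<Rightarrow> real^'n \<Rightarrow> 'n set" where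
  "Theta U E \<phi> = (\<Union>k. snd (aval U E \<phi> k))"

definition post :: "(real \<Rightarrow> real) \<Rightarrow> (real \<Rightarrow> real) \<Rightarrow> ('n::finite \<Rightarrow> 'n \<Rightarrow> real)
                     \<Rightarrow> real^'n \<Rightarrow> real^'n" where
  "post U R E \<phi> = (\<chi> i. let e = (\<Sum>j\<in>Theta U E \<phi>. E i j) in
       if i \<in> Theta U E \<phi> then Jmap U R e (\<phi>$i) else Hmap U e (\<phi>$i))"

text \<open>State just before the next event: after the event, phases grow at unit rate until
  the largest phase reaches 1.\<close>
definition next_pre :: "(real \<Rightarrow> real) \<Rightarrow> (real \<Rightarrow> real) \<Rightarrow> ('n::finite \<Rightarrow> 'n \<Rightarrow> real)
                     \<Rightarrow> real^'n \<Rightarrow> real^'n" where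
  "next_pre U R E \<phi> = (let \<psi> = post U R E \<phi> in
       (\<chi> i. \<psi>$i + (1 - Max (range (\<lambda>j. \<psi>$j)))))"

definition return_time :: "(real \<Rightarrow> real) \<Rightarrow> (real \<Rightarrow> real) \<Rightarrow> ('n::finite \<Rightarrow> 'n \<Rightarrow> real)
                     \<Rightarrow> 'n \<Rightarrow> real^'n \<Rightarrow> nat" where
  "return_time U R E r \<phi> = (LEAST m. 0 < m \<and> r \<in> Theta U E ((next_pre U R E ^^ m) \<phi>))"

definition return_map :: "(real \<Rightarrow> real) \<Rightarrow> (real \<Rightarrow> real) \<Rightarrow> ('n::finite \<Rightarrow> 'n \<Rightarrow> real)
                     \<Rightarrow> 'n \<Rightarrow> real^'n \<Rightarrow> real^'n" where
  "return_map U R E r \<phi> = (next_pre U R E ^^ return_time U R E r \<phi>) \<phi>"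

definition splay_state :: "(real \<Rightarrow> real) \<Rightarrow> (real \<Rightarrow> real) \<Rightarrow> ('n::finite \<Rightarrow> 'n \<Rightarrow> real)
                     \<Rightarrow> 'n \<Rightarrow> real^'n \<Rightarrow> bool" where
  "splay_state U R E r \<phi> \<longleftrightarrow>
     (\<forall>i. 0 \<le> \<phi>$i \<and> \<phi>$i \<le> 1) \<and> \<phi>$r = 1 \<and> r \<in> Theta U E \<phi> \<and>
     (\<exists>m>0. r \<in> Theta U E ((next_pre U R E ^^ m) \<phi>)) \<and>
     return_map U R E r \<phi> = \<phi> \<and>
     (\<forall>k. card (Theta U E ((next_pre U R E ^^ k) \<phi>)) = 1)"

definition lin_stable :: "(real \<Rightarrow> real) \<Rightarrow> (real \<Rightarrow> real) \<Rightarrow> ('n::finite \<Rightarrow> 'n \<Rightarrow> real)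
                     \<Rightarrow> 'n \<Rightarrow> real^'n \<Rightarrow> bool" where
  "lin_stable U R E r \<phi> \<longleftrightarrow>
     (\<exists>L. ((\<lambda>\<delta>. return_map U R E r (\<phi> + \<delta>)) has_derivative L) (at 0 within {\<delta>. \<delta>$r = 0}) \<and>
          (\<forall>\<delta>. \<delta>$r = 0 \<longrightarrow> (\<lambda>n. (L ^^ n) \<delta>) \<longlonglongrightarrow> 0))"

end

theory Submission
  imports Defs
begin

text \<open>
  Write \<open>H = Hmap U \<epsilon>\<close> for the effect of one pulse on a unit that does not fire.  If at an
  event exactly one unit is at phase 1 and every other unit stays below threshold after its
  pulse, the avalanche has size 1, the firing unit is reset to 0 and every other phase \<open>x\<close>
  becomes \<open>H x\<close>; the next event happens when the largest of these phases reaches 1.  The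
  splay state is a rotating ladder of phases \<open>1 = w 0 > w 1 > ... > w (N-1) = d\<close> with
  \<open>w (k-1) = H (w k) + d\<close>; a suitable gap \<open>d > 0\<close> exists by the intermediate value theorem,
  because \<open>(N-1)\<epsilon> < 1\<close>.  Near the splay orbit each event is a smooth map whose derivative
  multiplies the perturbation of each non-firing unit by \<open>H' x = U' x / U' (H x)\<close> and then
  subtracts a common shift.  Strict convexity gives \<open>0 < H' < 1\<close>, so every event contracts
  the oscillation \<open>max - min\<close> of a perturbation by a uniform factor below 1; as the
  oscillation bounds the norm of perturbations vanishing at the reference unit, the iterates
  of the linearised return map tend to zero.
\<close>

definition all_to_all :: "real \<Rightarrow> 'n \<Rightarrow> 'n \<Rightarrow> real" where
  "all_to_all e = (\<lambda>i j. if i = j then 0 else e)"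

locale pulse_network =
  fixes U :: "real \<Rightarrow> real" and D :: "nat \<Rightarrow> real \<Rightarrow> real" and R :: "real \<Rightarrow> real"
    and eps :: real
  assumes rise: "rise_function U D" and convex: "\<forall>x\<ge>0. D 2 x > 0"
    and neuronal: "neuronal_reset R" and eps_pos: "eps > 0"
begin

lemma U0: "U 0 = 0" and U1: "U 1 = 1" and D1_pos: "x \<ge> 0 \<Longrightarrow> D 1 x > 0"
  using rise by (auto simp: rise_function_def)

lemma R0: "R 0 = 0"
  using neuronal by (simp add: neuronal_reset_def partial_reset_def)

lemma U_deriv_within: "x \<ge> 0 \<Longrightarrow> (U has_real_derivative D 1 x) (at x within {0..})"
  using rise unfolding rise_function_def higher_derivs_def by (metis One_nat_def)

lemma D1_deriv_within: "x \<ge> 0 \<Longrightarrow> (D 1 has_real_derivative D 2 x) (at x within {0..})"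
  using rise unfolding rise_function_def higher_derivs_def by (metis One_nat_def Suc_1)

lemma interior_nonneg: "interior {0::real..} = {0<..}"
  by (rule interior_Ici[of "-1"]) auto

lemma U_deriv: "x > 0 \<Longrightarrow> (U has_real_derivative D 1 x) (at x)"
  using U_deriv_within[of x] at_within_interior[of x "{0..}"] interior_nonneg by auto

lemma D1_deriv: "x > 0 \<Longrightarrow> (D 1 has_real_derivative D 2 x) (at x)"
  using D1_deriv_within[of x] at_within_interior[of x "{0..}"] interior_nonneg by auto

lemma U_cont: "continuous_on {0..} U"
  unfolding continuous_on_eq_continuous_within
  by (auto intro: DERIV_continuous[OF U_deriv_within])

lemma D1_cont: "continuous_on {0..} (D 1)"
  unfolding continuous_on_eq_continuous_within
  using DERIV_continuous[OF D1_deriv_within] by blast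

lemma strict_mono_by_deriv:
  assumes "0 \<le> x" "x < y" and cont: "continuous_on {0..} f"
    and deriv: "\<And>z. z > 0 \<Longrightarrow> (f has_real_derivative f' z) (at z)"
    and pos: "\<And>z. z > 0 \<Longrightarrow> f' z > 0"
  shows "f x < f y"
proof (rule DERIV_pos_imp_increasing_open[OF assms(2)])
  fix z assume "x < z" "z < y"
  then show "\<exists>l. DERIV f z :> l \<and> 0 < l"
    using assms(1) deriv pos by (intro exI[of _ "f' z"]) auto
qed (use assms in \<open>auto intro: continuous_on_subset[OF cont]\<close>)

lemma U_strict: "0 \<le> x \<Longrightarrow> x < y \<Longrightarrow> U x < U y"
  by (rule strict_mono_by_deriv[OF _ _ U_cont U_deriv]) (use D1_pos[unfolded One_nat_def] in auto)

lemma D1_strict: "0 \<le> x \<Longrightarrow> x < y \<Longrightarrow> D 1 x < D 1 y"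
  by (rule strict_mono_by_deriv[OF _ _ D1_cont D1_deriv]) (use convex in auto)

lemma U_less_iff: "0 \<le> x \<Longrightarrow> 0 \<le> y \<Longrightarrow> U x < U y \<longleftrightarrow> x < y"
  by (metis U_strict linorder_neqE_linordered_idom order_less_asym)

lemma U_le_iff: "0 \<le> x \<Longrightarrow> 0 \<le> y \<Longrightarrow> U x \<le> U y \<longleftrightarrow> x \<le> y"
  by (meson U_less_iff not_le)

lemma U_inj: "inj_on U {0..}"
  by (rule inj_onI) (metis U_less_iff atLeast_iff linorder_neqE_linordered_idom order_less_irrefl)

lemma U_nonneg: "x \<ge> 0 \<Longrightarrow> U x \<ge> 0"
  using U_le_iff[of 0 x] U0 by simp

text \<open>Convexity makes \<open>U\<close> unbounded: on \<open>[1,\<infinity>)\<close> it grows at least with slope \<open>U'(1)\<close>.\<close>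
lemma U_unbounded: assumes "y \<ge> 1" shows "\<exists>x\<ge>0. U x \<ge> y"
proof -
  define b where "b = 1 + (y - 1) / D 1 1 + 1"
  have d1: "D 1 1 > 0" using D1_pos by simp
  have "(y - 1) / D 1 1 \<ge> 0" using d1 assms by simp
  hence b1: "b > 1" by (simp add: b_def)
  have cb: "continuous_on {1..b} U" by (rule continuous_on_subset[OF U_cont]) auto
  have db: "U differentiable (at x)" if "1 < x" "x < b" for x
    using U_deriv[of x] that real_differentiable_def by force
  obtain l z where z: "1 < z" "z < b" "DERIV U z :> l" "U b - U 1 = (b - 1) * l"
    using MVT[OF b1 cb db] by blast
  have "l = D 1 z" using z U_deriv[of z] DERIV_unique by force
  hence "l \<ge> D 1 1" using D1_strict[of 1 z] z by simp
  hence "U b - 1 \<ge> (b - 1) * D 1 1" using z U1 b1 by (simp add: mult_left_mono)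
  moreover have "(b - 1) * D 1 1 = y - 1 + D 1 1" using d1 by (simp add: b_def field_simps)
  ultimately show ?thesis using b1 d1 by (intro exI[of _ b]) auto
qed

lemma U_onto: assumes "y \<ge> 0" shows "\<exists>x\<ge>0. U x = y"
proof -
  obtain b where b: "b \<ge> 0" "U b \<ge> y" using U_unbounded[of "max y 1"] by auto
  have "continuous_on {0..b} U" using U_cont by (rule continuous_on_subset) auto
  then obtain x where "0 \<le> x" "U x = y" using IVT'[of U 0 y b] b assms U0 by auto
  thus ?thesis by auto
qed

abbreviation Ui :: "real \<Rightarrow> real" where "Ui \<equiv> Uinv U"

lemma Ui_U: "x \<ge> 0 \<Longrightarrow> Ui (U x) = x"
  unfolding Uinv_def by (rule the_inv_into_f_f[OF U_inj]) auto

lemma U_Ui: "y \<ge> 0 \<Longrightarrow> U (Ui y) = y \<and> Ui y \<ge> 0"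
  using U_onto[of y] Ui_U by force

lemma Ui0: "Ui 0 = 0" using Ui_U[of 0] U0 by simp

lemma Ui_less_iff: "0 \<le> a \<Longrightarrow> 0 \<le> b \<Longrightarrow> Ui a < Ui b \<longleftrightarrow> a < b"
  using U_less_iff U_Ui by metis

lemma Ui_le_iff: "0 \<le> a \<Longrightarrow> 0 \<le> b \<Longrightarrow> Ui a \<le> Ui b \<longleftrightarrow> a \<le> b"
  using Ui_less_iff not_le by metis

lemma Ui_pos: "y > 0 \<Longrightarrow> Ui y > 0"
  using Ui_less_iff[of 0 y] Ui0 by simp

lemma U_image_interval: "c \<ge> 0 \<Longrightarrow> U ` {0..c} = {0..U c}"
proof
  assume c: "c \<ge> 0"
  show "U ` {0..c} \<subseteq> {0..U c}" using U_nonneg U_le_iff by auto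
  show "{0..U c} \<subseteq> U ` {0..c}"
  proof
    fix y assume y: "y \<in> {0..U c}"
    then have "U (Ui y) = y" "Ui y \<ge> 0" using U_Ui by auto
    moreover have "Ui y \<le> c" using y Ui_le_iff[of y "U c"] Ui_U c U_nonneg by auto
    ultimately show "y \<in> U ` {0..c}" by (metis atLeastAtMost_iff image_eqI)
  qed
qed

lemma Ui_cont: "continuous_on {0..} Ui"
  unfolding continuous_on_eq_continuous_within
proof
  fix y :: real assume "y \<in> {0..}"
  then obtain c where c: "c \<ge> 0" "U c = y + 1" using U_onto[of "y + 1"] by auto
  have "continuous_on (U ` {0..c}) Ui"
    by (rule continuous_on_inv) (use U_cont Ui_U in \<open>auto intro: continuous_on_subset\<close>)
  hence "continuous (at y within {0..y+1}) Ui"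
    using \<open>y \<in> {0..}\<close> by (simp add: U_image_interval c continuous_on_eq_continuous_within)
  moreover have "at y within {0..y+1} = at y within {0..}"
    by (rule at_within_nhd[of y "{..<y+1}"]) auto
  ultimately show "continuous (at y within {0..}) Ui" by simp
qed

lemma Ui_isCont: "y > 0 \<Longrightarrow> isCont Ui y"
  using continuous_on_interior[OF Ui_cont, of y] interior_nonneg by auto

lemma Ui_deriv: assumes "y > 0" shows "DERIV Ui y :> inverse (D 1 (Ui y))"
proof (rule DERIV_inverse_function[where f=U and a=0 and b="y+1"])
  show "DERIV U (Ui y) :> D 1 (Ui y)" using U_deriv Ui_pos assms by blast
  show "D 1 (Ui y) \<noteq> 0" using D1_pos U_Ui assms by (metis less_imp_le order_less_irrefl)
  show "\<And>z. 0 < z \<Longrightarrow> z < y + 1 \<Longrightarrow> U (Ui z) = z" using U_Ui by auto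
qed (use assms Ui_isCont in auto)

abbreviation H :: "real \<Rightarrow> real" where "H \<equiv> Hmap U eps"

lemma H_eq: "H = (\<lambda>x. Ui (U x + eps))"
  by (simp add: fun_eq_iff Hmap_def)

lemma H_facts: assumes "x \<ge> 0"
  shows "H x \<ge> 0" "U (H x) = U x + eps" "H x > x"
proof -
  have y: "U x + eps \<ge> 0" using U_nonneg[OF assms] eps_pos by simp
  show "H x \<ge> 0" "U (H x) = U x + eps" using U_Ui[OF y] by (auto simp: Hmap_def)
  then show "H x > x" using U_less_iff[OF assms, of "H x"] eps_pos by simp
qed

lemma H_less_iff: "0 \<le> x \<Longrightarrow> 0 \<le> y \<Longrightarrow> H x < H y \<longleftrightarrow> x < y"
  using H_facts[of x] H_facts[of y] U_less_iff[of "H x" "H y"] U_less_iff[of x y] by simp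

lemma H_le_iff: "0 \<le> x \<Longrightarrow> 0 \<le> y \<Longrightarrow> H x \<le> H y \<longleftrightarrow> x \<le> y"
  using H_less_iff not_le by metis

lemma H_less_1_iff: "0 \<le> x \<Longrightarrow> H x < 1 \<longleftrightarrow> U x + eps < 1"
  using U_less_iff[of "H x" 1] H_facts[of x] U1 by simp

lemma H_cont: "continuous_on {0..} H"
proof -
  have "continuous_on {0..} (\<lambda>x. U x + eps)" using U_cont by (intro continuous_intros)
  moreover have "(\<lambda>x. U x + eps) ` {0..} \<subseteq> {0..}" using U_nonneg eps_pos by force
  ultimately show ?thesis unfolding H_eq using continuous_on_compose2[OF Ui_cont] by blast
qed

text \<open>The derivative of \<open>H\<close>, the factor by which a pulse scales a small phase difference.\<close>
definition gain :: "real \<Rightarrow> real" where "gain x = D 1 x / D 1 (H x)"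

lemma H_deriv: assumes "x > 0" shows "DERIV H x :> gain x"
proof -
  have y: "U x + eps > 0" using U_nonneg[of x] assms eps_pos by simp
  have "DERIV (\<lambda>x. Ui (U x + eps)) x :> inverse (D 1 (Ui (U x + eps))) * D 1 x"
  proof (rule DERIV_chain2[where g="\<lambda>x. U x + eps"])
    show "DERIV Ui (U x + eps) :> inverse (D 1 (Ui (U x + eps)))" using Ui_deriv[OF y] .
    show "DERIV (\<lambda>x. U x + eps) x :> D 1 x"
      using U_deriv[OF assms] by (auto intro: derivative_eq_intros)
  qed
  then show ?thesis unfolding gain_def H_eq by (simp add: field_simps)
qed

text \<open>The key consequence of strict convexity: a pulse strictly contracts phase differences.\<close>
lemma gain_bounds: assumes "x \<ge> 0" shows "0 < gain x" "gain x < 1"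
proof -
  have "D 1 x > 0" "D 1 (H x) > D 1 x" using D1_pos D1_strict H_facts assms by auto
  then show "0 < gain x" "gain x < 1" unfolding gain_def by auto
qed

text \<open>The phase ladder started at gap \<open>d\<close>: a unit that fired \<open>j\<close> events ago has phase
  \<open>ladder d j\<close> when every event shifts the phases by \<open>d\<close> after the pulse.\<close>
primrec ladder :: "real \<Rightarrow> nat \<Rightarrow> real" where
  "ladder d 0 = d"
| "ladder d (Suc j) = H (ladder d j) + d"

lemma ladder_ge: "d \<ge> 0 \<Longrightarrow> ladder d j \<ge> d"
  by (induction j) (use H_facts in force)+

lemma ladder_zero_gap: "U (ladder 0 j) = real j * eps"
proof (induction j)
  case (Suc j)
  have "ladder 0 j \<ge> 0" using ladder_ge[of 0] by simp
  thus ?case using Suc H_facts(2)[of "ladder 0 j"] by (simp add: algebra_simps)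
qed (simp add: U0)

lemma ladder_cont: "continuous_on {0..} (\<lambda>d. ladder d j)"
proof (induction j)
  case (Suc j)
  have "(\<lambda>d. ladder d j) ` {0..} \<subseteq> {0..}" using ladder_ge by (force intro: order_trans)
  hence "continuous_on {0..} (\<lambda>d. H (ladder d j))"
    using continuous_on_compose2[OF H_cont Suc] by blast
  then show ?case by (simp add: continuous_intros)
qed (simp add: continuous_on_id)

text \<open>Under \<open>(n-1)\<epsilon> < 1\<close> some positive gap closes the ladder: its top rung is exactly 1.
  At gap 0 the top rung is below 1 by the previous lemma, at gap 1 it is at least 1.\<close>
lemma ladder_closing_gap: assumes "n \<ge> 2" "(real n - 1) * eps < 1"
  shows "\<exists>d. 0 < d \<and> ladder d (n - 1) = 1"
proof -
  have "U (ladder 0 (n - 1)) < U 1" using ladder_zero_gap[of "n - 1"] assms U1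
    by (simp add: of_nat_diff)
  hence low: "ladder 0 (n - 1) < 1" using U_less_iff ladder_ge[of 0] by auto
  have high: "ladder 1 (n - 1) \<ge> 1" using ladder_ge[of 1] by simp
  have "continuous_on {0..1} (\<lambda>d. ladder d (n - 1))"
    by (rule continuous_on_subset[OF ladder_cont]) auto
  then obtain d where "0 \<le> d" "ladder d (n - 1) = 1"
    using IVT'[of "\<lambda>d. ladder d (n - 1)" 0 1 1] low high by auto
  moreover have "d \<noteq> 0" using low calculation by auto
  ultimately show ?thesis by (intro exI[of _ d]) auto
qed

lemma ladder_step: "d \<ge> 0 \<Longrightarrow> ladder d j < ladder d (Suc j)"
  using H_facts(3)[of "ladder d j"] ladder_ge[of d j] by auto

lemma ladder_mono: "d \<ge> 0 \<Longrightarrow> j < k \<Longrightarrow> ladder d j < ladder d k"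
  using lift_Suc_mono_less[of "ladder d", OF ladder_step] by blast

lemma ladder_mono_le: "d \<ge> 0 \<Longrightarrow> j \<le> k \<Longrightarrow> ladder d j \<le> ladder d k"
  using ladder_mono by (metis le_less)

text \<open>The state just before the next event, when unit \<open>t\<close> fires alone and \<open>s\<close> is the
  non-firing unit of largest phase (which therefore fires next).\<close>
definition event_map :: "'n::finite \<Rightarrow> 'n \<Rightarrow> real^'n \<Rightarrow> real^'n" where
  "event_map t s x = (\<chi> i. (if i = t then 0 else H (x$i)) + (1 - H (x$s)))"

definition regular :: "'n::finite \<Rightarrow> 'n \<Rightarrow> real^'n \<Rightarrow> bool" where
  "regular t s x \<longleftrightarrow> x$t = 1 \<and> (\<forall>i. i \<noteq> t \<longrightarrow> 0 < x$i \<and> U (x$i) + eps < 1 \<and> x$i \<le> x$s)"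

lemma Theta_single:
  fixes x :: "real^'n::finite"
  assumes xt: "x$t = 1" and sub: "\<And>i. i \<noteq> t \<Longrightarrow> 0 < x$i \<and> U (x$i) + eps < 1"
  shows "Theta U (all_to_all eps) x = {t}"
proof -
  let ?A = "aval U (all_to_all eps) x"
  have "x$j < 1" if "j \<noteq> t" for j
    using sub[OF that] U_less_iff[of "x$j" 1] U1 eps_pos by simp
  hence start: "{j. x$j = 1} = {t}" using xt by force
  have stage1: "snd (?A (Suc 0)) = {}"
  proof -
    have "\<not> (U (x$i) < 1 \<and> 1 \<le> U (x$i) + (\<Sum>j\<in>{t}. all_to_all eps i j))" for i
      using sub[of i] xt U1 by (cases "i = t") (auto simp: all_to_all_def)
    thus ?thesis by (simp add: start Let_def)
  qed
  have later: "snd (?A (Suc k)) = {}" for k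
  proof (induction k)
    case (Suc k)
    then show ?case by (simp only: aval.simps(2)[of U _ x "Suc k"] Let_def snd_conv) simp
  qed (rule stage1)
  have "Theta U (all_to_all eps) x = snd (?A 0) \<union> (\<Union>k. snd (?A (Suc k)))"
    unfolding Theta_def
  proof (intro equalityI subsetI)
    fix y assume "y \<in> (\<Union>k. snd (?A k))"
    then obtain k where "y \<in> snd (?A k)" by blast
    then show "y \<in> snd (?A 0) \<union> (\<Union>k. snd (?A (Suc k)))" by (cases k) auto
  qed blast
  also have "\<dots> = {t}" using start later by simp
  finally show ?thesis .
qed

lemma Theta_regular: "regular t s x \<Longrightarrow> Theta U (all_to_all eps) x = {t}"
  unfolding regular_def by (rule Theta_single) auto

lemma next_pre_regular:
  fixes x :: "real^'n::finite"
  assumes reg: "regular t s x" and st: "s \<noteq> t"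
  shows "next_pre U R (all_to_all eps) x = event_map t s x"
proof -
  have xt: "x$t = 1" and sub: "\<And>i. i \<noteq> t \<Longrightarrow> 0 < x$i \<and> x$i \<le> x$s"
    using reg by (auto simp: regular_def)
  have post: "post U R (all_to_all eps) x = (\<chi> i. if i = t then 0 else H (x$i))"
    unfolding post_def Theta_regular[OF reg]
    by (simp add: vec_eq_iff all_to_all_def Jmap_def xt U1 R0 Ui0)
  have "Max (range (\<lambda>j. post U R (all_to_all eps) x $ j)) = H (x$s)"
  proof (rule Max_eqI)
    fix y assume "y \<in> range (\<lambda>j. post U R (all_to_all eps) x $ j)"
    then obtain j where y: "y = post U R (all_to_all eps) x $ j" by auto
    show "y \<le> H (x$s)"
    proof (cases "j = t")
      case True thus ?thesis using y H_facts(1)[of "x$s"] sub[OF st] by (simp add: post)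
    next
      case False
      then have "H (x$j) \<le> H (x$s)" using H_le_iff[of "x$j" "x$s"] sub[OF False] sub[OF st] by simp
      then show ?thesis using y False by (simp add: post)
    qed
  qed (use st in \<open>auto simp: post\<close>)
  then show ?thesis unfolding next_pre_def Let_def event_map_def by (simp add: post vec_eq_iff)
qed

end

text \<open>The oscillation \<open>max - min\<close> of the components of a vector, a seminorm that ignores
  common shifts of all phases.\<close>
definition osc :: "real^'n::finite \<Rightarrow> real" where
  "osc v = Max (range (\<lambda>i. v$i)) - Min (range (\<lambda>i. v$i))"

lemma osc_abs: assumes "v$r = 0" shows "\<bar>v$i\<bar> \<le> osc v"
proof -
  have "Min (range (\<lambda>i. v$i)) \<le> v$j" "v$j \<le> Max (range (\<lambda>i. v$i))" for j by auto
  from this[of i] this[of r] show ?thesis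
    using assms unfolding osc_def abs_le_iff by (intro conjI) linarith+
qed

lemma norm_le_osc: assumes "v$r = 0" shows "norm v \<le> real CARD('n) * osc (v::real^'n::finite)"
proof -
  have "norm v \<le> (\<Sum>i\<in>UNIV. \<bar>v$i\<bar>)" by (rule norm_le_l1_cart)
  also have "\<dots> \<le> of_nat (card (UNIV::'n set)) * osc v"
    by (rule sum_bounded_above) (use osc_abs[OF assms] in auto)
  finally show ?thesis by simp
qed

text \<open>The reason: \<open>max v \<ge> 0 \<ge> min v\<close>, so all new entries lie in \<open>[c min v, c max v]\<close>.\<close>
lemma osc_scale_shift:
  fixes v :: "real^'n::finite"
  assumes vt: "v$t = 0" and b: "\<And>i. i \<noteq> t \<Longrightarrow> 0 \<le> b i \<and> b i \<le> c" and c: "c \<ge> 0"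
  shows "osc (\<chi> i. (if i = t then 0 else b i * v$i) - K) \<le> c * osc v"
proof -
  define M where "M = Max (range (\<lambda>i. v$i))"
  define m where "m = Min (range (\<lambda>i. v$i))"
  have vb: "m \<le> v$i" "v$i \<le> M" for i by (auto simp: M_def m_def)
  have M0: "M \<ge> 0" and m0: "m \<le> 0" using vb[of t] vt by auto
  have scaled: "c * m \<le> (if i = t then 0 else b i * v$i) \<and> (if i = t then 0 else b i * v$i) \<le> c * M"
    for i
  proof (cases "i = t")
    case True thus ?thesis using c M0 m0 by (simp add: mult_nonneg_nonpos)
  next
    case False
    hence bi: "0 \<le> b i" "b i \<le> c" using b by auto
    have "c * m \<le> b i * v$i \<and> b i * v$i \<le> c * M"
    proof (cases "v$i \<ge> 0")
      case True
      have "c * m \<le> 0" using c m0 by (simp add: mult_nonneg_nonpos)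
      moreover have "0 \<le> b i * v$i" using bi True by simp
      moreover have "b i * v$i \<le> c * v$i" using bi True by (simp add: mult_right_mono)
      moreover have "c * v$i \<le> c * M" using vb[of i] c by (simp add: mult_left_mono)
      ultimately show ?thesis by linarith
    next
      case False
      have "0 \<le> c * M" using c M0 by simp
      moreover have "b i * v$i \<le> 0" using bi False by (simp add: mult_nonneg_nonpos)
      moreover have "c * v$i \<le> b i * v$i" using bi False by (simp add: mult_right_mono_neg)
      moreover have "c * m \<le> c * v$i" using vb[of i] c by (simp add: mult_left_mono)
      ultimately show ?thesis by linarith
    qed
    thus ?thesis using False by simp
  qed
  define w where "w = (\<chi> i. (if i = t then 0 else b i * v$i) - K)"
  have "Max (range (\<lambda>i. w$i)) \<le> c * M - K" using scaled by (simp add: w_def)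
  moreover have "c * m - K \<le> Min (range (\<lambda>i. w$i))" using scaled by (simp add: w_def)
  ultimately have "osc w \<le> c * M - c * m" unfolding osc_def by linarith
  thus ?thesis by (simp add: w_def osc_def M_def m_def right_diff_distrib)
qed

lemma vec_has_derivative:
  fixes f :: "'a::real_normed_vector \<Rightarrow> real^'n::finite"
  assumes "\<And>i. ((\<lambda>x. f x $ i) has_derivative (\<lambda>h. f' h $ i)) F"
  shows "(f has_derivative f') F"
proof -
  have sum_axis: "(\<Sum>i\<in>UNIV. (v $ i) *\<^sub>R axis i (1::real)) = v" for v :: "real^'n"
    by (simp add: vec_eq_iff axis_def if_distrib sum.delta cong: if_cong)
  have "((\<lambda>x. \<Sum>i\<in>UNIV. (f x $ i) *\<^sub>R axis i (1::real)) has_derivative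
         (\<lambda>h. \<Sum>i\<in>UNIV. (f' h $ i) *\<^sub>R axis i (1::real))) F"
    by (intro has_derivative_sum has_derivative_scaleR_left assms)
  thus ?thesis by (simp add: sum_axis)
qed

context pulse_network
begin

lemma H_component_deriv:
  fixes p :: "real^'n::finite"
  assumes "p$i > 0"
  shows "((\<lambda>x. H (x$i)) has_derivative (\<lambda>h. gain (p$i) * h$i)) (at p)"
proof -
  have "(H has_derivative (\<lambda>h. gain (p$i) * h)) (at (p$i))"
    using H_deriv[OF assms] by (simp add: has_field_derivative_def)
  from diff_chain_at[OF bounded_linear_imp_has_derivative[OF bounded_linear_vec_nth[of i]] this]
  show ?thesis by (simp add: o_def)
qed

definition event_deriv :: "'n::finite \<Rightarrow> 'n \<Rightarrow> real^'n \<Rightarrow> real^'n \<Rightarrow> real^'n" where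
  "event_deriv t s p h = (\<chi> i. (if i = t then 0 else gain (p$i) * h$i) - gain (p$s) * h$s)"

lemma event_map_deriv:
  fixes p :: "real^'n::finite"
  assumes pos: "\<And>i. i \<noteq> t \<Longrightarrow> p$i > 0" and st: "s \<noteq> t"
  shows "(event_map t s has_derivative event_deriv t s p) (at p)"
proof (rule vec_has_derivative)
  fix i
  have leader: "((\<lambda>x. H (x$s)) has_derivative (\<lambda>h. gain (p$s) * h$s)) (at p)"
    using H_component_deriv pos st by blast
  show "((\<lambda>x. event_map t s x $ i) has_derivative (\<lambda>h. event_deriv t s p h $ i)) (at p)"
  proof (cases "i = t")
    case True
    have "((\<lambda>x. 0 + (1 - H (x$s))) has_derivative (\<lambda>h. 0 + (0 - gain (p$s) * h$s))) (at p)"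
      by (intro has_derivative_add has_derivative_diff has_derivative_const leader)
    thus ?thesis using True by (simp add: event_map_def event_deriv_def)
  next
    case False
    have "((\<lambda>x. H (x$i) + (1 - H (x$s))) has_derivative
           (\<lambda>h. gain (p$i) * h$i + (0 - gain (p$s) * h$s))) (at p)"
      by (intro has_derivative_add has_derivative_diff has_derivative_const leader
          H_component_deriv) (use pos False in auto)
    thus ?thesis using False by (simp add: event_map_def event_deriv_def)
  qed
qed

end

lemma mod_shift_inverse: fixes a K N :: nat assumes "a < N"
  shows "a = ((a + K) mod N + (N - 1) * K) mod N"
proof -
  obtain M where M: "N = Suc M" using assms by (cases N) auto
  have e: "a + K + (N - 1) * K = a + N * K" using M by (simp add: algebra_simps)
  have "a = (a + N * K) mod N" using assms by simp
  also have "\<dots> = (a + K + (N - 1) * K) mod N" by (simp only: e)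
  also have "\<dots> = ((a + K) mod N + (N - 1) * K) mod N" by (simp only: mod_add_left_eq)
  finally show ?thesis .
qed

text \<open>The splay orbit of a network of at least two units: \<open>d\<close> is a gap closing the ladder,
  and \<open>idx\<close> enumerates the units, which fire in the order \<open>r, idx\<^sup>-\<^sup>1(idx r - 1), \<dots>\<close>.\<close>
locale splay_orbit = pulse_network U D R eps for U D R eps +
  fixes r :: "'n::finite" and d :: real and idx :: "'n \<Rightarrow> nat"
  assumes two_units: "CARD('n) \<ge> 2" and gap_pos: "d > 0"
    and ladder_closed: "ladder d (CARD('n) - 1) = 1"
    and idx: "bij_betw idx UNIV {0..<CARD('n)}"
begin

text \<open>Phase of the unit of rank \<open>k\<close>: rank 0 is at threshold, rank \<open>N-1\<close> fired last.\<close>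
definition level :: "nat \<Rightarrow> real" where "level k = ladder d (CARD('n) - 1 - k)"

text \<open>Rank of unit \<open>i\<close> just before the \<open>m\<close>-th event; every event lowers all ranks by one,
  cyclically.\<close>
definition rank :: "nat \<Rightarrow> 'n \<Rightarrow> nat" where
  "rank m i = (idx i + (CARD('n) - idx r) + m * (CARD('n) - 1)) mod CARD('n)"

definition orbit :: "nat \<Rightarrow> real^'n" where "orbit m = (\<chi> i. level (rank m i))"
definition firing :: "nat \<Rightarrow> 'n" where "firing m = (SOME i. rank m i = 0)"
definition leader :: "nat \<Rightarrow> 'n" where "leader m = (SOME i. rank m i = 1)"

lemma level_0: "level 0 = 1" using ladder_closed by (simp add: level_def)
lemma level_last: "level (CARD('n) - 1) = d" by (simp add: level_def)
lemma level_ge: "level k \<ge> d" using ladder_ge gap_pos by (simp add: level_def)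
lemma level_le_1: "level k \<le> 1"
  using ladder_mono_le[of d "CARD('n) - 1 - k" "CARD('n) - 1"] gap_pos ladder_closed
  by (simp add: level_def)
lemma level_strict: "j < k \<Longrightarrow> k < CARD('n) \<Longrightarrow> level k < level j"
  using ladder_mono[of d "CARD('n) - 1 - k" "CARD('n) - 1 - j"] gap_pos by (simp add: level_def)

lemma level_step: assumes "1 \<le> k" "k \<le> CARD('n) - 1" shows "H (level k) + d = level (k - 1)"
proof -
  have e: "CARD('n) - 1 - (k - 1) = Suc (CARD('n) - 1 - k)" using assms by simp
  have "level (k - 1) = ladder d (Suc (CARD('n) - 1 - k))" unfolding level_def e ..
  thus ?thesis by (simp add: level_def)
qed

lemma level_subthreshold: assumes "1 \<le> k" "k \<le> CARD('n) - 1" shows "U (level k) + eps < 1"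
proof -
  have "H (level k) < 1" using level_step[OF assms] level_le_1[of "k - 1"] gap_pos by simp
  thus ?thesis using H_less_1_iff level_ge[of k] gap_pos by simp
qed

lemma H_level_1: "H (level 1) = 1 - d"
proof -
  have "1 \<le> CARD('n) - 1" using two_units by simp
  thus ?thesis using level_step[of 1] level_0 by simp
qed

lemma card_pos: "CARD('n) > 0" using two_units by simp

lemma idx_lt: "idx i < CARD('n)" using idx by (auto simp: bij_betw_def)

lemma rank_lt: "rank m i < CARD('n)" using card_pos by (simp add: rank_def)

lemma rank_Suc: "rank (Suc m) i = (if rank m i = 0 then CARD('n) - 1 else rank m i - 1)"
proof -
  define c where "c = idx i + (CARD('n) - idx r) + m * (CARD('n) - 1)"
  have e: "Suc m * (CARD('n) - 1) = m * (CARD('n) - 1) + (CARD('n) - 1)" by simp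
  have "rank (Suc m) i = (c + (CARD('n) - 1)) mod CARD('n)"
    by (simp only: rank_def c_def e add.assoc)
  also have "\<dots> = (rank m i + (CARD('n) - 1)) mod CARD('n)"
    by (simp only: rank_def c_def[symmetric] mod_add_left_eq)
  also have "\<dots> = (if rank m i = 0 then CARD('n) - 1 else rank m i - 1)"
  proof (cases "rank m i = 0")
    case False
    have "rank m i + (CARD('n) - 1) = (rank m i - 1) + CARD('n)" using False card_pos by simp
    then have "(rank m i + (CARD('n) - 1)) mod CARD('n) = (rank m i - 1) mod CARD('n)"
      by (simp only: mod_add_self2)
    then show ?thesis using False rank_lt[of m i] by simp
  qed (use card_pos in simp)
  finally show ?thesis .
qed

lemma rank_inj: "rank m i = rank m j \<Longrightarrow> i = j"
proof -
  assume h: "rank m i = rank m j"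
  define K where "K = (CARD('n) - idx r) + m * (CARD('n) - 1)"
  have "(idx i + K) mod CARD('n) = (idx j + K) mod CARD('n)"
    using h by (simp add: rank_def K_def add.assoc)
  hence "idx i = idx j"
    using mod_shift_inverse[OF idx_lt[of i], of K] mod_shift_inverse[OF idx_lt[of j], of K] by simp
  thus "i = j" using idx by (auto simp: bij_betw_def inj_def)
qed

lemma rank_surj: "k < CARD('n) \<Longrightarrow> \<exists>i. rank m i = k"
proof -
  assume k: "k < CARD('n)"
  have "inj (rank m)" using rank_inj by (auto simp: inj_def)
  hence "card (range (rank m)) = CARD('n)" by (simp add: card_image)
  moreover have "range (rank m) \<subseteq> {0..<CARD('n)}" using rank_lt by auto
  ultimately have "range (rank m) = {0..<CARD('n)}" by (simp add: card_subset_eq)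
  hence "k \<in> range (rank m)" using k by simp
  thus ?thesis by auto
qed

lemma rank_firing: "rank m (firing m) = 0"
  unfolding firing_def by (rule someI_ex) (use rank_surj card_pos in auto)
lemma rank_leader: "rank m (leader m) = 1"
  unfolding leader_def by (rule someI_ex) (use rank_surj two_units in auto)
lemma firing_iff: "rank m i = 0 \<longleftrightarrow> i = firing m" using rank_firing rank_inj by metis
lemma leader_iff: "rank m i = 1 \<longleftrightarrow> i = leader m" using rank_leader rank_inj by metis
lemma leader_ne_firing: "leader m \<noteq> firing m"
  using rank_firing[of m] rank_leader[of m] by (metis zero_neq_one)
lemma leader_fires_next: "leader m = firing (Suc m)"
  using firing_iff[of "Suc m" "leader m"] by (simp add: rank_Suc rank_leader)

lemma rank_0_r: "rank 0 r = 0" using idx_lt[of r] by (simp add: rank_def)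
lemma firing_0: "firing 0 = r" using firing_iff rank_0_r by simp

lemma rank_period: "rank CARD('n) i = rank 0 i"
proof -
  have "rank CARD('n) i = (idx i + (CARD('n) - idx r) + (CARD('n) - 1) * CARD('n)) mod CARD('n)"
    by (simp add: rank_def mult.commute)
  also have "\<dots> = rank 0 i" by (simp add: rank_def)
  finally show ?thesis .
qed

lemma orbit_period: "orbit CARD('n) = orbit 0" by (simp add: orbit_def rank_period)
lemma firing_period: "firing CARD('n) = r"
  using firing_iff[of "CARD('n)" r] rank_period rank_0_r by simp

lemma rank_r: "m \<le> CARD('n) \<Longrightarrow> rank m r = (if m = 0 then 0 else CARD('n) - m)"
  by (induction m) (simp_all add: rank_0_r rank_Suc)

lemma firing_ne_r: "0 < m \<Longrightarrow> m < CARD('n) \<Longrightarrow> firing m \<noteq> r"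
  using rank_r[of m] rank_firing[of m] by auto

lemma orbit_leader_ahead:
  assumes "i \<noteq> firing m" "i \<noteq> leader m" shows "orbit m $ i < orbit m $ leader m"
proof -
  have "1 < rank m i" using assms firing_iff[of m i] leader_iff[of m i] by linarith
  thus ?thesis using level_strict[of 1 "rank m i"] rank_lt[of m i] by (simp add: orbit_def rank_leader)
qed

lemma orbit_regular: "regular (firing m) (leader m) (orbit m)"
  unfolding regular_def
proof (intro conjI allI impI)
  show "orbit m $ firing m = 1" by (simp add: orbit_def rank_firing level_0)
  fix i assume "i \<noteq> firing m"
  hence k: "1 \<le> rank m i" "rank m i \<le> CARD('n) - 1" using firing_iff[of m i] rank_lt[of m i] by auto
  show "0 < orbit m $ i" using level_ge gap_pos by (simp add: orbit_def less_le_trans)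
  show "U (orbit m $ i) + eps < 1" using level_subthreshold[OF k] by (simp add: orbit_def)
  show "orbit m $ i \<le> orbit m $ leader m"
    using orbit_leader_ahead[of i m] \<open>i \<noteq> firing m\<close> by (cases "i = leader m") auto
qed

lemma event_map_orbit: "event_map (firing m) (leader m) (orbit m) = orbit (Suc m)"
proof (subst vec_eq_iff, intro allI)
  fix i
  show "event_map (firing m) (leader m) (orbit m) $ i = orbit (Suc m) $ i"
  proof (cases "i = firing m")
    case True thus ?thesis
      using rank_firing[of m] level_last H_level_1
      by (simp add: event_map_def orbit_def rank_Suc rank_leader)
  next
    case False
    hence k: "1 \<le> rank m i" "rank m i \<le> CARD('n) - 1"
      using firing_iff[of m i] rank_lt[of m i] by auto
    show ?thesis using False level_step[OF k] k H_level_1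
      by (simp add: event_map_def orbit_def rank_Suc rank_leader)
  qed
qed

lemma next_pre_orbit: "next_pre U R (all_to_all eps) (orbit m) = orbit (Suc m)"
  using next_pre_regular[OF orbit_regular leader_ne_firing] event_map_orbit by simp

lemma iterate_orbit: "(next_pre U R (all_to_all eps) ^^ m) (orbit 0) = orbit m"
  by (induction m) (auto simp: next_pre_orbit)

lemma Theta_orbit: "Theta U (all_to_all eps) (orbit m) = {firing m}"
  by (rule Theta_regular[OF orbit_regular])

lemma return_time_orbit: "return_time U R (all_to_all eps) r (orbit 0) = CARD('n)"
  unfolding return_time_def iterate_orbit Theta_orbit
proof (rule Least_equality)
  show "0 < CARD('n) \<and> r \<in> {firing CARD('n)}" using firing_period card_pos by simp
  fix m assume "0 < m \<and> r \<in> {firing m}"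
  thus "CARD('n) \<le> m" using firing_ne_r[of m] by force
qed

theorem splay: "splay_state U R (all_to_all eps) r (orbit 0)"
  unfolding splay_state_def
proof (intro conjI allI)
  fix i
  show "0 \<le> orbit 0 $ i" "orbit 0 $ i \<le> 1"
    using level_ge level_le_1 gap_pos by (auto simp: orbit_def intro: order_trans[of 0 d])
next
  show "orbit 0 $ r = 1" using orbit_regular[of 0] firing_0 by (simp add: regular_def)
  show "r \<in> Theta U (all_to_all eps) (orbit 0)" using Theta_orbit firing_0 by simp
  show "\<exists>m>0. r \<in> Theta U (all_to_all eps) ((next_pre U R (all_to_all eps) ^^ m) (orbit 0))"
    using iterate_orbit Theta_orbit firing_period card_pos by (intro exI[of _ "CARD('n)"]) auto
  show "return_map U R (all_to_all eps) r (orbit 0) = orbit 0"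
    unfolding return_map_def return_time_orbit iterate_orbit orbit_period ..
  fix k show "card (Theta U (all_to_all eps) ((next_pre U R (all_to_all eps) ^^ k) (orbit 0))) = 1"
    by (simp add: iterate_orbit Theta_orbit)
qed

primrec event_chain :: "nat \<Rightarrow> real^'n \<Rightarrow> real^'n" where
  "event_chain 0 x = x"
| "event_chain (Suc m) x = event_map (firing m) (leader m) (event_chain m x)"

primrec lin :: "nat \<Rightarrow> real^'n \<Rightarrow> real^'n" where
  "lin 0 h = h"
| "lin (Suc m) h = event_deriv (firing m) (leader m) (orbit m) (lin m h)"

lemma event_chain_orbit: "event_chain m (orbit 0) = orbit m"
  by (induction m) (auto simp: event_map_orbit)

lemma event_chain_deriv: "(event_chain m has_derivative lin m) (at (orbit 0))"
proof (induction m)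
  case 0
  show ?case using has_derivative_ident by (simp add: id_def[symmetric] fun_eq_iff)
next
  case (Suc m)
  have "0 < orbit m $ i" if "i \<noteq> firing m" for i
    using orbit_regular[of m] that by (simp add: regular_def)
  hence "(event_map (firing m) (leader m) has_derivative
         event_deriv (firing m) (leader m) (orbit m)) (at (event_chain m (orbit 0)))"
    unfolding event_chain_orbit by (intro event_map_deriv leader_ne_firing)
  from diff_chain_at[OF Suc.IH this] show ?case by (simp add: o_def)
qed

abbreviation near_splay :: "(real^'n) filter" where
  "near_splay \<equiv> at 0 within {\<delta>. \<delta>$r = 0}"

lemma event_chain_tendsto: "((\<lambda>\<delta>. event_chain m (orbit 0 + \<delta>)) \<longlongrightarrow> orbit m) near_splay"
proof -
  have "isCont (event_chain m) (orbit 0)" using has_derivative_continuous[OF event_chain_deriv] .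
  moreover have "((\<lambda>\<delta>. orbit 0 + \<delta>) \<longlongrightarrow> orbit 0) near_splay"
    using tendsto_add[OF tendsto_const[of "orbit 0"] tendsto_ident_at[of 0 "{\<delta>. \<delta>$r = 0}"]]
    by simp
  ultimately show ?thesis using isCont_tendsto_compose event_chain_orbit by metis
qed

text \<open>Small admissible perturbations stay regular along the first events: the threshold
  condition holds exactly (the leader is put at phase 1), the others are strict inequalities
  satisfied on the orbit and preserved by continuity.\<close>
lemma eventually_regular:
  "eventually (\<lambda>\<delta>. regular (firing m) (leader m) (event_chain m (orbit 0 + \<delta>))) near_splay"
proof -
  let ?x = "\<lambda>\<delta>. event_chain m (orbit 0 + \<delta>)"
  have comp: "((\<lambda>\<delta>. ?x \<delta> $ i) \<longlongrightarrow> orbit m $ i) near_splay" for i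
    by (intro tendsto_vec_nth event_chain_tendsto)
  have at_threshold: "eventually (\<lambda>\<delta>. ?x \<delta> $ firing m = 1) near_splay"
  proof (cases m)
    case 0
    have "orbit 0 $ r = 1" using firing_0 orbit_regular[of 0] by (simp add: regular_def)
    hence "\<forall>\<delta>\<in>{\<delta>. \<delta>$r = 0}. ?x \<delta> $ firing m = 1" using 0 firing_0 by simp
    thus ?thesis unfolding eventually_at_filter by (auto intro: always_eventually)
  next
    case (Suc k)
    then show ?thesis
      using leader_ne_firing[of k] by (simp add: event_map_def leader_fires_next[symmetric])
  qed
  have strict: "eventually (\<lambda>\<delta>. 0 < ?x \<delta> $ i \<and> U (?x \<delta> $ i) + eps < 1
                   \<and> ?x \<delta> $ i \<le> ?x \<delta> $ leader m) near_splay" if i: "i \<noteq> firing m" for i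
  proof -
    have orb: "0 < orbit m $ i" "U (orbit m $ i) + eps < 1"
      "i \<noteq> leader m \<Longrightarrow> orbit m $ i < orbit m $ leader m"
      using orbit_regular[of m] i orbit_leader_ahead[OF i] by (simp_all add: regular_def)
    have "isCont U (orbit m $ i)" using DERIV_isCont[OF U_deriv[OF orb(1)]] .
    from isCont_tendsto_compose[OF this comp[of i]]
    have "((\<lambda>\<delta>. U (?x \<delta> $ i) + eps) \<longlongrightarrow> U (orbit m $ i) + eps) near_splay"
      by (rule tendsto_add[OF _ tendsto_const])
    from order_tendstoD(2)[OF this orb(2)]
    have ev_sub: "eventually (\<lambda>\<delta>. U (?x \<delta> $ i) + eps < 1) near_splay" .
    have ev_pos: "eventually (\<lambda>\<delta>. 0 < ?x \<delta> $ i) near_splay"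
      using order_tendstoD(1)[OF comp[of i] orb(1)] .
    have ev_lead: "eventually (\<lambda>\<delta>. ?x \<delta> $ i \<le> ?x \<delta> $ leader m) near_splay"
    proof (cases "i = leader m")
      case False
      have "0 < orbit m $ leader m - orbit m $ i" using orb(3)[OF False] by simp
      from order_tendstoD(1)[OF tendsto_diff[OF comp[of "leader m"] comp[of i]] this]
      have "eventually (\<lambda>\<delta>. 0 < ?x \<delta> $ leader m - ?x \<delta> $ i) near_splay" .
      thus ?thesis by (rule eventually_mono) simp
    qed simp
    show ?thesis using ev_pos ev_sub ev_lead by eventually_elim simp
  qed
  have "eventually (\<lambda>\<delta>. \<forall>i. i \<noteq> firing m \<longrightarrow> 0 < ?x \<delta> $ i \<and> U (?x \<delta> $ i) + eps < 1
          \<and> ?x \<delta> $ i \<le> ?x \<delta> $ leader m) near_splay"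
  proof (rule eventually_all_finite)
    fix i
    show "eventually (\<lambda>\<delta>. i \<noteq> firing m \<longrightarrow> 0 < ?x \<delta> $ i \<and> U (?x \<delta> $ i) + eps < 1
            \<and> ?x \<delta> $ i \<le> ?x \<delta> $ leader m) near_splay"
      using strict[of i] by (cases "i = firing m") simp_all
  qed
  with at_threshold show ?thesis by eventually_elim (simp add: regular_def)
qed

lemma eventually_iterate_eq_chain:
  "eventually (\<lambda>\<delta>. (next_pre U R (all_to_all eps) ^^ m) (orbit 0 + \<delta>)
                     = event_chain m (orbit 0 + \<delta>)) near_splay"
proof (induction m)
  case (Suc m)
  from Suc.IH eventually_regular[of m] show ?case
    by eventually_elim (simp add: next_pre_regular leader_ne_firing)
qed simp

lemma eventually_return_map:
  "eventually (\<lambda>\<delta>. return_map U R (all_to_all eps) r (orbit 0 + \<delta>)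
                     = event_chain CARD('n) (orbit 0 + \<delta>)) near_splay"
proof -
  let ?iter = "\<lambda>m \<delta>. (next_pre U R (all_to_all eps) ^^ m) (orbit 0 + \<delta>)"
  have "eventually (\<lambda>\<delta>. \<forall>m\<in>{..CARD('n)}. Theta U (all_to_all eps) (?iter m \<delta>) = {firing m})
          near_splay"
  proof (intro eventually_ball_finite ballI)
    fix m
    from eventually_iterate_eq_chain[of m] eventually_regular[of m]
    show "eventually (\<lambda>\<delta>. Theta U (all_to_all eps) (?iter m \<delta>) = {firing m}) near_splay"
      by eventually_elim (simp add: Theta_regular)
  qed simp
  with eventually_iterate_eq_chain[of "CARD('n)"] show ?thesis
  proof eventually_elim
    case (elim \<delta>)
    have firings: "Theta U (all_to_all eps) (?iter m \<delta>) = {firing m}" if "m \<le> CARD('n)" for m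
      using elim(2) that by blast
    have "return_time U R (all_to_all eps) r (orbit 0 + \<delta>) = CARD('n)"
      unfolding return_time_def
    proof (rule Least_equality)
      show "0 < CARD('n) \<and> r \<in> Theta U (all_to_all eps) (?iter CARD('n) \<delta>)"
        using firings[of "CARD('n)"] firing_period card_pos by simp
      fix m assume m: "0 < m \<and> r \<in> Theta U (all_to_all eps) (?iter m \<delta>)"
      show "CARD('n) \<le> m"
        using firings[of m] m firing_ne_r[of m] by (cases "m < CARD('n)") auto
    qed
    thus ?case using elim(1) by (simp add: return_map_def)
  qed
qed

lemma return_map_deriv:
  "((\<lambda>\<delta>. return_map U R (all_to_all eps) r (orbit 0 + \<delta>)) has_derivative lin CARD('n)) near_splay"
proof (rule has_derivative_transform_eventually)
  have "((\<lambda>\<delta>. orbit 0 + \<delta>) has_derivative (\<lambda>h. h)) (at 0)"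
    by (intro derivative_eq_intros) auto
  from diff_chain_at[OF this, of "event_chain CARD('n)" "lin CARD('n)"] event_chain_deriv
  have "((\<lambda>\<delta>. event_chain CARD('n) (orbit 0 + \<delta>)) has_derivative lin CARD('n)) (at 0)"
    by (simp add: o_def)
  thus "((\<lambda>\<delta>. event_chain CARD('n) (orbit 0 + \<delta>)) has_derivative lin CARD('n)) near_splay"
    by (rule has_derivative_at_withinI)
  show "eventually (\<lambda>\<delta>. event_chain CARD('n) (orbit 0 + \<delta>)
          = return_map U R (all_to_all eps) r (orbit 0 + \<delta>)) near_splay"
    using eventually_return_map by (rule eventually_mono) simp
  show "event_chain CARD('n) (orbit 0 + 0) = return_map U R (all_to_all eps) r (orbit 0 + 0)"
    using splay unfolding splay_state_def by (simp add: event_chain_orbit orbit_period)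
qed simp

definition rate :: real where "rate = Max ((\<lambda>k. gain (level k)) ` {1..CARD('n) - 1})"

lemma rate_bounds: "0 \<le> rate" "rate < 1"
proof -
  have gain: "0 < gain (level k)" "gain (level k) < 1" for k
    using gain_bounds[of "level k"] level_ge[of k] gap_pos by auto
  have ne: "{1..CARD('n) - 1} \<noteq> {}" using two_units by auto
  show "rate < 1" using ne gain by (simp add: rate_def)
  have "gain (level 1) \<le> rate" unfolding rate_def by (rule Max_ge) (use two_units in auto)
  thus "0 \<le> rate" using gain[of 1] by simp
qed

lemma gain_orbit_le_rate: "i \<noteq> firing m \<Longrightarrow> 0 \<le> gain (orbit m $ i) \<and> gain (orbit m $ i) \<le> rate"
proof -
  assume "i \<noteq> firing m"
  hence k: "rank m i \<in> {1..CARD('n) - 1}" using firing_iff[of m i] rank_lt[of m i] by auto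
  have "gain (level (rank m i)) \<le> rate" unfolding rate_def by (rule Max_ge) (use k in auto)
  moreover have "0 < gain (level (rank m i))"
    using gain_bounds level_ge[of "rank m i"] gap_pos by (meson less_le_trans less_imp_le)
  ultimately show ?thesis by (simp add: orbit_def)
qed

lemma lin_contracts: assumes "v $ r = 0"
  shows "lin m v $ firing m = 0 \<and> osc (lin m v) \<le> rate ^ m * osc v"
proof (induction m)
  case 0 thus ?case using assms firing_0 by simp
next
  case (Suc m)
  have "lin (Suc m) v $ firing (Suc m) = 0"
    using leader_ne_firing[of m] by (simp add: leader_fires_next[symmetric] event_deriv_def)
  moreover have "osc (lin (Suc m) v) \<le> rate * osc (lin m v)"
    unfolding lin.simps event_deriv_def
    by (rule osc_scale_shift) (use Suc.IH gain_orbit_le_rate rate_bounds in auto)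
  moreover have "rate * osc (lin m v) \<le> rate * (rate ^ m * osc v)"
    using Suc.IH rate_bounds by (simp add: mult_left_mono)
  ultimately show ?case by simp
qed

lemma lin_iterate_contracts: assumes "v $ r = 0"
  shows "(lin CARD('n) ^^ n) v $ r = 0 \<and> osc ((lin CARD('n) ^^ n) v) \<le> (rate ^ CARD('n)) ^ n * osc v"
proof (induction n)
  case (Suc n)
  let ?u = "(lin CARD('n) ^^ n) v"
  have "lin CARD('n) ?u $ r = 0 \<and> osc (lin CARD('n) ?u) \<le> rate ^ CARD('n) * osc ?u"
    using lin_contracts[of ?u "CARD('n)"] Suc.IH firing_period by simp
  moreover have "rate ^ CARD('n) * osc ?u \<le> rate ^ CARD('n) * ((rate ^ CARD('n)) ^ n * osc v)"
    using Suc.IH rate_bounds by (simp add: mult_left_mono)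
  ultimately show ?case by (simp add: mult.assoc)
qed (use assms in simp)

text \<open>Stability: \<open>lin N\<close> contracts the oscillation by \<open>rate ^ N\<close>, which bounds the norm.\<close>
theorem stable: "lin_stable U R (all_to_all eps) r (orbit 0)"
  unfolding lin_stable_def
proof (intro exI conjI allI impI)
  show "((\<lambda>\<delta>. return_map U R (all_to_all eps) r (orbit 0 + \<delta>)) has_derivative lin CARD('n)) near_splay"
    by (rule return_map_deriv)
  fix v :: "real^'n" assume v: "v $ r = 0"
  define q where "q = rate ^ CARD('n)"
  have q: "norm q < 1" using rate_bounds card_pos by (simp add: q_def power_less_one_iff)
  have bound: "norm ((lin CARD('n) ^^ n) v) \<le> real CARD('n) * (q ^ n * osc v)" for n
  proof -
    have h: "(lin CARD('n) ^^ n) v $ r = 0" "osc ((lin CARD('n) ^^ n) v) \<le> q ^ n * osc v"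
      using lin_iterate_contracts[OF v, of n] by (auto simp: q_def)
    have "norm ((lin CARD('n) ^^ n) v) \<le> real CARD('n) * osc ((lin CARD('n) ^^ n) v)"
      by (rule norm_le_osc[OF h(1)])
    also have "\<dots> \<le> real CARD('n) * (q ^ n * osc v)" using h(2) by (simp add: mult_left_mono)
    finally show ?thesis .
  qed
  have "(\<lambda>n. real CARD('n) * (q ^ n * osc v)) \<longlonglongrightarrow> 0"
    by (intro tendsto_mult_right_zero tendsto_mult_left_zero LIMSEQ_power_zero q)
  then show "(\<lambda>n. (lin CARD('n) ^^ n) v) \<longlonglongrightarrow> 0"
    by (rule Lim_null_comparison[OF always_eventually[OF allI[OF bound]]])
qed

end

context pulse_network
begin

text \<open>A single unit is a degenerate splay state: it fires, is reset to 0 and climbs back to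
  threshold; admissible perturbations are zero, so stability is trivial.\<close>
lemma single_unit_splay:
  fixes r :: "'n::finite"
  assumes one: "CARD('n) = 1"
  defines "\<phi> \<equiv> (\<chi> i. 1) :: real^'n"
  shows "splay_state U R (all_to_all eps) r \<phi> \<and> lin_stable U R (all_to_all eps) r \<phi>"
proof -
  have all_r: "i = r" for i :: 'n using one by (metis card_1_singletonE singletonD UNIV_I)
  have \<phi>r: "\<phi> $ r = 1" by (simp add: \<phi>_def)
  have Th: "Theta U (all_to_all eps) \<phi> = {r}"
    by (rule Theta_single[OF \<phi>r]) (use all_r in blast)
  have "post U R (all_to_all eps) \<phi> = 0"
    unfolding post_def Th using all_r
    by (simp add: vec_eq_iff all_to_all_def Jmap_def \<phi>_def U1 R0 Ui0)
  hence fixed: "next_pre U R (all_to_all eps) \<phi> = \<phi>"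
    by (simp add: next_pre_def \<phi>_def vec_eq_iff)
  hence iter: "(next_pre U R (all_to_all eps) ^^ m) \<phi> = \<phi>" for m
    by (induction m) simp_all
  have "return_time U R (all_to_all eps) r \<phi> = 1"
    unfolding return_time_def iter Th by (rule Least_equality) auto
  hence "return_map U R (all_to_all eps) r \<phi> = \<phi>" by (simp add: return_map_def fixed)
  hence splay: "splay_state U R (all_to_all eps) r \<phi>"
    unfolding splay_state_def using \<phi>r Th iter by (auto simp: \<phi>_def)
  have trivial: "\<delta> = 0" if "\<delta> $ r = 0" for \<delta> :: "real^'n"
    using that all_r by (metis vec_eq_iff zero_index)
  have "((\<lambda>\<delta>. return_map U R (all_to_all eps) r (\<phi> + \<delta>)) has_derivative (\<lambda>h. 0))
          (at 0 within {\<delta>. \<delta> $ r = 0})"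
  proof (rule has_derivative_transform_eventually[OF has_derivative_const])
    show "eventually (\<lambda>\<delta>. \<phi> = return_map U R (all_to_all eps) r (\<phi> + \<delta>))
            (at 0 within {\<delta>. \<delta> $ r = 0})"
      unfolding eventually_at_filter
      by (rule always_eventually) (use trivial \<open>return_map U R (all_to_all eps) r \<phi> = \<phi>\<close> in auto)
  qed (use \<open>return_map U R (all_to_all eps) r \<phi> = \<phi>\<close> in simp_all)
  moreover have "((\<lambda>h::real^'n. 0::real^'n) ^^ n) \<delta> = 0" if "\<delta> $ r = 0" for n \<delta>
    using trivial[OF that] by (induction n) simp_all
  ultimately have "lin_stable U R (all_to_all eps) r \<phi>"
    unfolding lin_stable_def by (intro exI[of _ "\<lambda>h. 0"]) simp
  with splay show ?thesis by blast
qed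

end

theorem mainTheorem4:
  fixes U :: "real \<Rightarrow> real" and D :: "nat \<Rightarrow> real \<Rightarrow> real" and R :: "real \<Rightarrow> real"
    and \<epsilon> :: real and r :: "'n::finite"
  assumes "rise_function U D"
    and "\<forall>x\<ge>0. D 2 x > 0"
    and "neuronal_reset R"
    and "\<epsilon> > 0"
    and "(real CARD('n) - 1) * \<epsilon> < 1"
  shows "\<exists>\<phi>. splay_state U R (\<lambda>i j. if i = j then 0 else \<epsilon>) r \<phi> \<and>
             lin_stable U R (\<lambda>i j. if i = j then 0 else \<epsilon>) r \<phi>"
proof -
  interpret pulse_network U D R \<epsilon> using assms by unfold_locales auto
  have "\<exists>\<phi>. splay_state U R (all_to_all \<epsilon>) r \<phi> \<and> lin_stable U R (all_to_all \<epsilon>) r \<phi>"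
  proof (cases "CARD('n) \<ge> 2")
    case True
    obtain d where "0 < d" "ladder d (CARD('n) - 1) = 1"
      using ladder_closing_gap[OF True assms(5)] by blast
    moreover obtain idx where "bij_betw idx (UNIV :: 'n set) {0..<CARD('n)}"
      using ex_bij_betw_finite_nat[of "UNIV :: 'n set"] by auto
    ultimately interpret splay_orbit U D R \<epsilon> r d idx
      using True by unfold_locales auto
    show ?thesis using splay stable by blast
  next
    case False
    moreover have "0 < CARD('n)" by simp
    ultimately have "CARD('n) = 1" by linarith
    thus ?thesis using single_unit_splay by blast
  qed
  thus ?thesis by (simp add: all_to_all_def)
qed

end
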